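(* Let $k\ge1$ be an integer, $\alpha,\beta>0$, $b>0$, $\omega,\eta\in\mathbb{C}$ with $|\omega|=|\eta|=1$, $u,v\in[-1,1]$. Put $r=\sqrt{s^2+b^2}$, $R=s+r$, $w=-ib/R$, $X(u,v)=(\mathrm{Im}\,\omega^{k})(\mathrm{Im}\,\eta^{k})u+(\mathrm{Re}\,\omega^{k})(\mathrm{Re}\,\eta^{k})v$, $q(u,v)=\arccos X(u,v)$, \[A(s,q)=\prod_{l=0}^{k-1}\Big(s+ib\cos\Big(\frac{q+2\pi l}{k}\Big)\Big),\qquad B(s)=s+ib\,\mathrm{Re}(\omega\bar\eta),\] \[f_{I_{2k}}(s)=\frac{2^{k(\alpha+\beta)}}{rR^{k(\alpha+\beta)}}\frac{1-w^2}{1-w^{2k}}\,\frac{1-2w^{k}\mathrm{Re}(\omega^{k}\bar\eta^{k})+w^{2k}}{1-2\mathrm{Re}(\omega\bar\eta)w+w^2}\,\frac{1-w^{2k}}{(1-2w^{k}X(u,v)+w^{2k})^{\alpha+\beta+1}},\] \[g_{I_{k}}(s)=\frac{2^{k\alpha}}{rR^{k\alpha}}\frac{1-w^2}{1-w^{2k}}\,\frac{1-2w^{k}\mathrm{Re}(\omega^{k}\bar\eta^{k})+w^{2k}}{1-2\mathrm{Re}(\omega\bar\eta)w+w^2}\,\frac{1-w^{2k}}{(1-2w^{k}X(u,1)+w^{2k})^{\alpha+1}}.\] Then, for $s$ real and sufficiently large, \[f_{I_{2k}}(s)=\frac{A(s,q(1,1))}{B(s)[A(s,q(u,v))]^{\alpha+\beta+1}}=\frac{1}{B(s)[A(s,q(u,v))]^{\alpha+\beta}}+\frac{(-ib)^{k}\cos(q(u-1,v-1))}{2^{k-1}B(s)[A(s,q(u,v))]^{\alpha+\beta+1}},\]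 \[g_{I_{k}}(s)=\frac{A(s,q(1,1))}{B(s)[A(s,q(u,1))]^{\alpha+1}}=\frac{1}{B(s)[A(s,q(u,1))]^{\alpha}}+\frac{(-ib)^{k}\cos(q(u-1,0))}{2^{k-1}B(s)[A(s,q(u,1))]^{\alpha+1}}.\]
   Context: Non-integer powers are principal branches; $\arccos$ is extended to complex arguments so that $\cos(\arccos X)=X$ (needed since $X(u-1,v-1)$ may lie outside $[-1,1]$). *)

theory Defs
  imports "HOL-Analysis.Analysis"
begin

definition Xf :: "nat \<Rightarrow> complex \<Rightarrow> complex \<Rightarrow> real \<Rightarrow> real \<Rightarrow> real" where
  "Xf k \<omega> \<eta> u v = Im (\<omega>^k) * Im (\<eta>^k) * u + Re (\<omega>^k) * Re (\<eta>^k) * v"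

text \<open>q(u,v) = arccos X(u,v), with the complex (principal) arccos so that cos (q) = X always\<close>
definition qf :: "nat \<Rightarrow> complex \<Rightarrow> complex \<Rightarrow> real \<Rightarrow> real \<Rightarrow> complex" where
  "qf k \<omega> \<eta> u v = Arccos (complex_of_real (Xf k \<omega> \<eta> u v))"

definition Af :: "nat \<Rightarrow> real \<Rightarrow> real \<Rightarrow> complex \<Rightarrow> complex" where
  "Af k b s q = (\<Prod>l<k. complex_of_real s + \<i> * complex_of_real b
       * cos ((q + 2 * complex_of_real pi * of_nat l) / of_nat k))"

definition Bf :: "real \<Rightarrow> complex \<Rightarrow> complex \<Rightarrow> real \<Rightarrow> complex" where
  "Bf b \<omega> \<eta> s = complex_of_real s + \<i> * complex_of_real b * complex_of_real (Re (\<omega> * cnj \<eta>))"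

definition rf :: "real \<Rightarrow> real \<Rightarrow> real" where
  "rf b s = sqrt (s^2 + b^2)"

definition Rf :: "real \<Rightarrow> real \<Rightarrow> real" where
  "Rf b s = s + rf b s"

definition wf :: "real \<Rightarrow> real \<Rightarrow> complex" where
  "wf b s = - \<i> * complex_of_real b / complex_of_real (Rf b s)"

definition Ff :: "nat \<Rightarrow> real \<Rightarrow> real \<Rightarrow> complex \<Rightarrow> complex \<Rightarrow> real \<Rightarrow> real \<Rightarrow> complex" where
  "Ff k \<gamma> b \<omega> \<eta> Y s =
    (let r = rf b s; R = Rf b s; w = wf b s in
     complex_of_real (2 powr (real k * \<gamma>) / (r * R powr (real k * \<gamma>)))
     * ((1 - w^2) / (1 - w^(2*k)))
     * ((1 - 2 * w^k * complex_of_real (Re (\<omega>^k * cnj \<eta> ^ k)) + w^(2*k))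
        / (1 - 2 * complex_of_real (Re (\<omega> * cnj \<eta>)) * w + w^2))
     * ((1 - w^(2*k)) / ((1 - 2 * w^k * complex_of_real Y + w^(2*k)) powr complex_of_real (\<gamma> + 1))))"

definition fI2k :: "nat \<Rightarrow> real \<Rightarrow> real \<Rightarrow> real \<Rightarrow> complex \<Rightarrow> complex \<Rightarrow> real \<Rightarrow> real \<Rightarrow> real \<Rightarrow> complex" where
  "fI2k k \<alpha> \<beta> b \<omega> \<eta> u v s = Ff k (\<alpha> + \<beta>) b \<omega> \<eta> (Xf k \<omega> \<eta> u v) s"

definition gIk :: "nat \<Rightarrow> real \<Rightarrow> real \<Rightarrow> complex \<Rightarrow> complex \<Rightarrow> real \<Rightarrow> real \<Rightarrow> complex" where
  "gIk k \<alpha> b \<omega> \<eta> u s = Ff k \<alpha> b \<omega> \<eta> (Xf k \<omega> \<eta> u 1) s"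

end

theory Submission
  imports Defs "HOL-Computational_Algebra.Polynomial"
begin

(* With R = s + r one has s + i b cos t = (R/2) (1 - w e^(it)) (1 - w e^(-it)). For the angles
   t = (q + 2 pi l)/k the exponentials are e^(+-iq/k) times the k-th roots of unity, and
   prod_l (1 - a zeta_l) = 1 - a^k collapses the product to A(s,q) = (R/2)^k (1 - 2 w^k cos q + w^(2k)).
   Together with (1 - w^2) B(s) = r (1 - 2 Re(omega conj eta) w + w^2) this turns f and g into
   A(s,q(1,1)) / (B A^(gamma+1)). Since A is affine in cos q and X is linear, A(s,q(1,1)) - A(s,q(u,v))
   is a multiple of cos q(u-1,v-1), which gives the second equalities.
   Large s is only needed for |w| < 1 and Re B > 0, which keep the cancelled factors nonzero. *)

lemma prod_diff_roots_of_unity: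
  fixes z :: "nat \<Rightarrow> 'a::idom"
  assumes n: "n > 0" and root: "\<And>l. l < n \<Longrightarrow> z l ^ n = 1" and inj: "inj_on z {..<n}"
  shows "(\<Prod>l<n. x - z l) = x ^ n - 1"
proof -
  define p where "p = (\<Prod>l<n. [:- z l, 1:])"
  have deg: "degree p = n"
    by (simp add: p_def degree_prod_eq_sum_degree)
  have lead: "lead_coeff p = 1"
    by (simp add: p_def lead_coeff_prod)
  have "p = monom 1 n - 1"
  proof (rule poly_eqI_degree_lead_coeff[of _ n _ "z ` {..<n}"])
    show "poly p w = poly (monom 1 n - 1) w" if "w \<in> z ` {..<n}" for w
      using that root by (auto simp: p_def poly_prod poly_monom)
  qed (use deg lead n inj in \<open>auto simp: card_image degree_diff_le degree_monom_le\<close>)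
  then have "poly p x = x ^ n - 1" by (simp add: poly_monom)
  then show ?thesis by (simp add: p_def poly_prod)
qed

lemma prod_one_minus_roots_of_unity:
  fixes z :: "nat \<Rightarrow> 'a::field"
  assumes "n > 0" and "\<And>l. l < n \<Longrightarrow> z l ^ n = 1" and "inj_on z {..<n}"
  shows "(\<Prod>l<n. 1 - a * z l) = 1 - a ^ n"
proof (cases "a = 0")
  case False
  have "(\<Prod>l<n. 1 - a * z l) = (\<Prod>l<n. a * (inverse a - z l))"
    using False by (intro prod.cong) (auto simp: field_simps)
  also have "\<dots> = a ^ n * (inverse a ^ n - 1)"
    by (simp add: prod.distrib prod_diff_roots_of_unity assms)
  also have "\<dots> = 1 - a ^ n"
    using False by (simp add: field_simps)
  finally show ?thesis .
qed (use assms in simp)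

lemma prod_one_minus_mult_exp_roots:
  fixes a :: complex
  assumes n: "n > 0"
  shows "(\<Prod>l<n. 1 - a * exp (2 * of_real pi * \<i> * of_nat l / of_nat n)) = 1 - a ^ n"
    and "(\<Prod>l<n. 1 - a * exp (- (2 * of_real pi * \<i> * of_nat l / of_nat n))) = 1 - a ^ n"
proof -
  let ?z = "\<lambda>l. exp (2 * of_real pi * \<i> * of_nat l / of_nat n)"
  have root: "?z l ^ n = 1" for l
    using n by (intro complex_root_unity) simp
  have inj: "inj_on ?z {..<n}"
    using n by (auto simp: inj_on_def complex_root_unity_eq)
  show "(\<Prod>l<n. 1 - a * ?z l) = 1 - a ^ n"
    using n root inj by (rule prod_one_minus_roots_of_unity)
  have "(\<Prod>l<n. 1 - a * inverse (?z l)) = 1 - a ^ n"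
    using n root inj
    by (intro prod_one_minus_roots_of_unity) (auto simp: inj_on_def power_inverse)
  then show "(\<Prod>l<n. 1 - a * exp (- (2 * of_real pi * \<i> * of_nat l / of_nat n))) = 1 - a ^ n"
    by (simp add: exp_minus)
qed

lemma power_neq_1_if_norm_less_1:
  fixes w :: "'a::real_normed_div_algebra"
  shows "norm w < 1 \<Longrightarrow> n > 0 \<Longrightarrow> w ^ n \<noteq> 1"
  by (metis norm_one norm_power power_less_one_iff norm_ge_zero less_irrefl)

lemma of_real_plus_i_cos_factor:
  fixes R s b :: real and \<theta> :: complex
  assumes R: "R \<noteq> 0" and RR: "R\<^sup>2 = 2 * s * R + b\<^sup>2"
  defines "w \<equiv> - \<i> * of_real b / of_real R"
  shows "of_real s + \<i> * of_real b * cos \<theta>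
     = of_real (R / 2) * (1 - w * exp (\<i> * \<theta>)) * (1 - w * exp (- (\<i> * \<theta>)))"
proof -
  have "s = (R\<^sup>2 - b\<^sup>2) / (2 * R)"
    using R RR by (simp add: field_simps)
  then have s: "of_real s = (of_real R ^ 2 - of_real b ^ 2) / (2 * of_real R :: complex)"
    by simp
  have "(1 - w * exp (\<i> * \<theta>)) * (1 - w * exp (- (\<i> * \<theta>))) = 1 - 2 * w * cos \<theta> + w\<^sup>2"
    unfolding cos_exp_eq by (simp add: algebra_simps power2_eq_square exp_minus)
  also have "of_real (R / 2) * \<dots> = of_real s + \<i> * of_real b * cos \<theta>"
    unfolding s w_def using R by (simp add: field_simps power2_eq_square)
  finally show ?thesis by (simp add: mult.assoc)
qed

lemma Xf_one_one: "Xf k \<omega> \<eta> 1 1 = Re (\<omega> ^ k * cnj \<eta> ^ k)"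
  by (simp add: Xf_def algebra_simps flip: complex_cnj_power)

lemma Xf_diff: "Xf k \<omega> \<eta> (u - u') (v - v') = Xf k \<omega> \<eta> u v - Xf k \<omega> \<eta> u' v'"
  by (simp add: Xf_def algebra_simps)

lemma abs_less_rf:
  shows "b \<noteq> 0 \<Longrightarrow> \<bar>s\<bar> < rf b s" and "s \<noteq> 0 \<Longrightarrow> \<bar>b\<bar> < rf b s"
proof -
  have "sqrt (x\<^sup>2) < sqrt (x\<^sup>2 + y\<^sup>2)" if "y \<noteq> 0" for x y :: real
    using that by (intro real_sqrt_less_mono) simp
  then show "b \<noteq> 0 \<Longrightarrow> \<bar>s\<bar> < rf b s" and "s \<noteq> 0 \<Longrightarrow> \<bar>b\<bar> < rf b s"
    unfolding rf_def by (metis real_sqrt_abs add.commute)+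
qed

lemma Rf_pos: "b \<noteq> 0 \<Longrightarrow> Rf b s > 0"
  using abs_less_rf[of b s] unfolding Rf_def by linarith

lemma Rf_square: "(Rf b s)\<^sup>2 = 2 * s * Rf b s + b\<^sup>2"
  unfolding Rf_def rf_def by (simp add: power2_eq_square algebra_simps)

lemma norm_wf_less_1:
  assumes "b > 0" and "s > 0"
  shows "norm (wf b s) < 1"
proof -
  have "norm (wf b s) = b / Rf b s"
    using assms Rf_pos[of b s] by (simp add: wf_def norm_divide norm_mult)
  also have "\<dots> < 1"
    using assms abs_less_rf(2)[of s b] by (simp add: Rf_def)
  finally show ?thesis .
qed

lemma one_minus_wf_square_mult_Bf:
  assumes "b \<noteq> 0"
  shows "(1 - (wf b s)\<^sup>2) * Bf b \<omega> \<eta> s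
    = of_real (rf b s) * (1 - 2 * of_real (Re (\<omega> * cnj \<eta>)) * wf b s + (wf b s)\<^sup>2)"
proof -
  define R where "R = Rf b s"
  define r where "r = rf b s"
  define c where "c = Re (\<omega> * cnj \<eta>)"
  have R: "R \<noteq> 0"
    using Rf_pos[OF assms, of s] unfolding R_def by linarith
  have "R\<^sup>2 + b\<^sup>2 = 2 * r * R" and "R\<^sup>2 - b\<^sup>2 = 2 * s * R"
    using Rf_square[of b s] by (auto simp: R_def r_def Rf_def power2_eq_square algebra_simps)
  then have sum: "of_real R ^ 2 + of_real b ^ 2 = 2 * of_real r * (of_real R :: complex)"
    and diff: "of_real R ^ 2 - of_real b ^ 2 = 2 * of_real s * (of_real R :: complex)"
    by (metis of_real_add of_real_mult of_real_numeral of_real_power,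
        metis of_real_diff of_real_mult of_real_numeral of_real_power)
  have "(1 - (wf b s)\<^sup>2) * Bf b \<omega> \<eta> s
      = (of_real R ^ 2 + of_real b ^ 2) * (of_real s + \<i> * of_real b * of_real c) / of_real R ^ 2"
    using R by (simp add: wf_def Bf_def R_def c_def field_simps power2_eq_square)
  also have "\<dots> = of_real r * (of_real R ^ 2 - of_real b ^ 2 + 2 * \<i> * of_real b * of_real c * of_real R)
      / of_real R ^ 2"
    unfolding sum diff by (simp add: algebra_simps)
  also have "\<dots> = of_real r * (1 - 2 * of_real c * wf b s + (wf b s)\<^sup>2)"
    using R by (simp add: wf_def R_def field_simps power2_eq_square)
  finally show ?thesis by (simp only: c_def r_def)
qed

lemma Af_eq:
  assumes k: "k > 0" and b: "b \<noteq> 0"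
  shows "Af k b s q = of_real ((Rf b s / 2) ^ k) * (1 - 2 * wf b s ^ k * cos q + wf b s ^ (2 * k))"
proof -
  define w where "w = wf b s"
  define c where "c = exp (\<i> * q / of_nat k)"
  define \<zeta> where "\<zeta> l = exp (2 * of_real pi * \<i> * of_nat l / of_nat k)" for l :: nat
  have ck: "c ^ k = exp (\<i> * q)"
    using k by (simp add: c_def flip: exp_of_nat_mult)
  have "\<i> * ((q + 2 * of_real pi * of_nat l) / of_nat k)
      = \<i> * q / of_nat k + 2 * of_real pi * \<i> * of_nat l / of_nat k" for l
    by (simp add: add_divide_distrib algebra_simps)
  then have e: "exp (\<i> * ((q + 2 * of_real pi * of_nat l) / of_nat k)) = c * \<zeta> l" for l
    by (simp add: c_def \<zeta>_def exp_add)
  then have "exp (- (\<i> * ((q + 2 * of_real pi * of_nat l) / of_nat k))) = inverse c * inverse (\<zeta> l)" for l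
    by (simp add: exp_minus)
  with e have factor: "of_real s + \<i> * of_real b * cos ((q + 2 * of_real pi * of_nat l) / of_nat k)
      = of_real (Rf b s / 2) * (1 - (w * c) * \<zeta> l) * (1 - (w * inverse c) * inverse (\<zeta> l))" for l
    using of_real_plus_i_cos_factor[OF Rf_pos[OF b, THEN less_imp_neq, symmetric] Rf_square]
    by (simp add: w_def wf_def mult.assoc)
  have "Af k b s q = of_real (Rf b s / 2) ^ k
      * (\<Prod>l<k. 1 - (w * c) * \<zeta> l) * (\<Prod>l<k. 1 - (w * inverse c) * inverse (\<zeta> l))"
    unfolding Af_def factor by (simp only: prod.distrib prod_constant card_lessThan)
  also have "\<dots> = of_real ((Rf b s / 2) ^ k) * ((1 - (w * c) ^ k) * (1 - (w * inverse c) ^ k))"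
    using prod_one_minus_mult_exp_roots[OF k] by (simp add: \<zeta>_def exp_minus)
  also have "(1 - (w * c) ^ k) * (1 - (w * inverse c) ^ k) = 1 - 2 * w ^ k * cos q + w ^ (2 * k)"
    unfolding power_mult_distrib power_inverse ck cos_exp_eq
    by (simp add: algebra_simps exp_minus power_mult power2_eq_square)
  finally show ?thesis by (simp add: w_def mult.assoc)
qed

lemma Af_diff:
  assumes k: "k > 0" and b: "b \<noteq> 0"
  shows "Af k b s q' - Af k b s q = (- \<i> * of_real b) ^ k * (cos q - cos q') / 2 ^ (k - 1)"
proof -
  have "Af k b s q' - Af k b s q = 2 * (of_real ((Rf b s / 2) ^ k) * wf b s ^ k) * (cos q - cos q')"
    by (simp add: Af_eq[OF k b] algebra_simps)
  also have "of_real ((Rf b s / 2) ^ k) * wf b s ^ k = (- \<i> * of_real b) ^ k / 2 ^ k"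
    using Rf_pos[OF b, of s] by (simp add: wf_def field_simps flip: power_mult_distrib)
  also have "(2 :: complex) ^ k = 2 * 2 ^ (k - 1)"
    using k by (simp flip: power_Suc)
  finally show ?thesis by simp
qed

lemma Af_quotient_split:
  fixes B :: complex and \<gamma> :: real
  assumes k: "k > 0" and b: "b \<noteq> 0" and cos: "cos q'' = cos q - cos q'"
  shows "Af k b s q' / (B * Af k b s q powr of_real (\<gamma> + 1))
    = 1 / (B * Af k b s q powr of_real \<gamma>)
      + (- \<i> * of_real b) ^ k * cos q'' / (2 ^ (k - 1) * B * Af k b s q powr of_real (\<gamma> + 1))"
proof (cases "B = 0 \<or> Af k b s q = 0")
  case False
  have "Af k b s q powr of_real (\<gamma> + 1) = Af k b s q powr of_real \<gamma> * Af k b s q"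
    using False by (simp add: powr_add)
  moreover have "Af k b s q' = Af k b s q + (- \<i> * of_real b) ^ k * cos q'' / 2 ^ (k - 1)"
    unfolding cos using Af_diff[OF k b, of s q' q] by (metis add.commute diff_add_cancel)
  ultimately show ?thesis
    using False by (simp add: field_simps)
qed auto

lemma Ff_eq:
  assumes k: "k > 0" and b: "b > 0" and s: "s > 0"
  shows "Ff k \<gamma> b \<omega> \<eta> Y s
    = Af k b s (qf k \<omega> \<eta> 1 1) / (Bf b \<omega> \<eta> s * Af k b s (Arccos (of_real Y)) powr of_real (\<gamma> + 1))"
proof -
  define R r w B where "R = Rf b s" and "r = rf b s" and "w = wf b s" and "B = Bf b \<omega> \<eta> s"
  define D where "D = 1 - 2 * of_real (Re (\<omega> * cnj \<eta>)) * w + w\<^sup>2"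
  define P where "P y = 1 - 2 * w ^ k * of_real y + w ^ (2 * k)" for y :: real
  define c where "c = (R / 2) ^ k"
  define T where "T = (R / 2) powr (real k * \<gamma>)"
  define X where "X = Xf k \<omega> \<eta> 1 1"
  have R: "R > 0" and r: "r > 0"
    using Rf_pos[of b s] abs_less_rf(1)[of b s] b by (auto simp: R_def r_def)
  have c: "c > 0" and T: "T > 0"
    using R by (simp_all add: c_def T_def)
  have A: "Af k b s (Arccos (of_real y)) = of_real c * P y" for y
    using b by (simp add: Af_eq[OF k] c_def P_def R_def w_def)
  have A11: "Af k b s (qf k \<omega> \<eta> 1 1) = of_real c * P X"
    by (simp add: qf_def A X_def)
  have "of_real c powr of_real (\<gamma> + 1) = (of_real (c powr (\<gamma> + 1)) :: complex)"
    using c by (intro powr_of_real) simp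
  also have "c powr (\<gamma> + 1) = c * T"
    using R by (simp add: c_def T_def powr_realpow powr_powr powr_add algebra_simps flip: powr_realpow)
  finally have A_powr: "Af k b s (Arccos (of_real Y)) powr of_real (\<gamma> + 1)
      = of_real (c * T) * P Y powr of_real (\<gamma> + 1)"
    unfolding A using c by (subst powr_times_real_left) auto
  have w: "norm w < 1"
    using norm_wf_less_1[OF b s] by (simp add: w_def)
  have "Re B = s"
    by (simp add: B_def Bf_def)
  then have "B \<noteq> 0"
    using s by auto
  moreover have "1 - w\<^sup>2 \<noteq> 0" and "1 - w ^ (2 * k) \<noteq> 0"
    using w k power_neq_1_if_norm_less_1[of w] by simp_all
  moreover have "(1 - w\<^sup>2) * B = of_real r * D"
    using one_minus_wf_square_mult_Bf b by (simp add: w_def B_def r_def D_def)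
  ultimately have "D \<noteq> 0" and w2: "1 - w\<^sup>2 = of_real r * D / B"
    by (auto simp: field_simps)
  have "2 powr (real k * \<gamma>) / (r * R powr (real k * \<gamma>)) = 1 / (r * T)"
    using R by (simp add: T_def powr_divide)
  then have "Ff k \<gamma> b \<omega> \<eta> Y s = of_real (1 / (r * T))
      * ((1 - w\<^sup>2) / (1 - w ^ (2 * k))) * (P X / D) * ((1 - w ^ (2 * k)) / P Y powr of_real (\<gamma> + 1))"
    unfolding Ff_def Let_def Xf_one_one[symmetric] by (simp only: R_def r_def w_def D_def P_def X_def)
  also have "\<dots> = of_real c * P X / (B * (of_real (c * T) * P Y powr of_real (\<gamma> + 1)))"
    unfolding w2 using \<open>B \<noteq> 0\<close> \<open>D \<noteq> 0\<close> \<open>1 - w ^ (2 * k) \<noteq> 0\<close> r c T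
    by (cases "P Y powr of_real (\<gamma> + 1) = 0")
      (simp_all add: field_simps del: of_real_add)
  finally show ?thesis
    by (simp only: A11 A_powr B_def)
qed

theorem lemma15:
  fixes k :: nat and \<alpha> \<beta> b u v :: real and \<omega> \<eta> :: complex
  assumes "k \<ge> 1" and "\<alpha> > 0" and "\<beta> > 0" and "b > 0"
    and "norm \<omega> = 1" and "norm \<eta> = 1"
    and "u \<in> {-1..1}" and "v \<in> {-1..1}"
  shows "\<forall>\<^sub>F s in at_top.
     fI2k k \<alpha> \<beta> b \<omega> \<eta> u v s
       = Af k b s (qf k \<omega> \<eta> 1 1)
         / (Bf b \<omega> \<eta> s * Af k b s (qf k \<omega> \<eta> u v) powr complex_of_real (\<alpha> + \<beta> + 1))
   \<and> Af k b s (qf k \<omega> \<eta> 1 1)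
         / (Bf b \<omega> \<eta> s * Af k b s (qf k \<omega> \<eta> u v) powr complex_of_real (\<alpha> + \<beta> + 1))
       = 1 / (Bf b \<omega> \<eta> s * Af k b s (qf k \<omega> \<eta> u v) powr complex_of_real (\<alpha> + \<beta>))
         + (- \<i> * complex_of_real b) ^ k * cos (qf k \<omega> \<eta> (u - 1) (v - 1))
           / (2 ^ (k - 1) * Bf b \<omega> \<eta> s * Af k b s (qf k \<omega> \<eta> u v) powr complex_of_real (\<alpha> + \<beta> + 1))
   \<and> gIk k \<alpha> b \<omega> \<eta> u s
       = Af k b s (qf k \<omega> \<eta> 1 1)
         / (Bf b \<omega> \<eta> s * Af k b s (qf k \<omega> \<eta> u 1) powr complex_of_real (\<alpha> + 1))
   \<and> Af k b s (qf k \<omega> \<eta> 1 1)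
         / (Bf b \<omega> \<eta> s * Af k b s (qf k \<omega> \<eta> u 1) powr complex_of_real (\<alpha> + 1))
       = 1 / (Bf b \<omega> \<eta> s * Af k b s (qf k \<omega> \<eta> u 1) powr complex_of_real \<alpha>)
         + (- \<i> * complex_of_real b) ^ k * cos (qf k \<omega> \<eta> (u - 1) 0)
           / (2 ^ (k - 1) * Bf b \<omega> \<eta> s * Af k b s (qf k \<omega> \<eta> u 1) powr complex_of_real (\<alpha> + 1))"
proof -
  have k: "k > 0" and b: "b \<noteq> 0"
    using assms by auto
  have cos_f: "cos (qf k \<omega> \<eta> (u - 1) (v - 1)) = cos (qf k \<omega> \<eta> u v) - cos (qf k \<omega> \<eta> 1 1)"
    and cos_g: "cos (qf k \<omega> \<eta> (u - 1) 0) = cos (qf k \<omega> \<eta> u 1) - cos (qf k \<omega> \<eta> 1 1)"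
    using Xf_diff[of k \<omega> \<eta> u 1 v 1] Xf_diff[of k \<omega> \<eta> u 1 1 1] by (simp_all add: qf_def)
  have "\<forall>\<^sub>F s in at_top. s > (0::real)"
    by (rule eventually_gt_at_top)
  then show ?thesis
  proof eventually_elim
    case (elim s)
    show ?case
      unfolding fI2k_def gIk_def
      using Ff_eq[OF k \<open>b > 0\<close> elim, where \<gamma> = "\<alpha> + \<beta>" and Y = "Xf k \<omega> \<eta> u v", folded qf_def]
        Ff_eq[OF k \<open>b > 0\<close> elim, where \<gamma> = \<alpha> and Y = "Xf k \<omega> \<eta> u 1", folded qf_def]
        Af_quotient_split[OF k b cos_f, where \<gamma> = "\<alpha> + \<beta>" and s = s and B = "Bf b \<omega> \<eta> s"]
        Af_quotient_split[OF k b cos_g, where \<gamma> = \<alpha> and s = s and B = "Bf b \<omega> \<eta> s"]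
      by blast
  qed
qed

end
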